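(* Let $n,m\ge 1$, $p_{ij}\in\mathbb{R}^3$, $N^x_i,N^y_i,N^z_i\in\mathbb{R}^3\setminus\{0\}$, $d_x,d_y>0$, $\epsilon>0$. Let $\mathbb{B}_R=\{r:\|r-r_c\|_\infty\le\delta_R\}$ with $\delta_R\ge0$, $\sqrt3\,\delta_R\le\pi$, $\Phi_c=R(r_c)$, and $\mathbb{B}_t=\{\Delta:\|\Delta-\Delta_c\|_\infty\le\delta_t\}$ with $\delta_t\ge0$. For each $i,j$ and each $a\in\{x,y,z\}$, with $N=N^a_i$ and $w=p_{ij}-\Delta_c$, let $c=(\Phi_c\bar N)^\top w$, let $\beta=\angle(\Phi_c\bar N,w)$ (if $w=0$ set $g_{\max}=g_{\min}=0$), and define $g_{\max},g_{\min}$ by: $g_{\max}=\|w\|$ if $\beta\le\sqrt3\delta_R$, otherwise $g_{\max}=\|w\|\max(\cos(\beta-\sqrt3\delta_R),\cos(\beta+\sqrt3\delta_R))$; $g_{\min}=-\|w\|$ if $\beta\ge\pi-\sqrt3\delta_R$, otherwise $g_{\min}=\|w\|\min(\cos(\beta-\sqrt3\delta_R),\cos(\beta+\sqrt3\delta_R))$. Set $$\delta^a_{ij}=\sqrt3\,\delta_t+\max\bigl(|c-g_{\min}|,\ |c-g_{\max}|\bigr).$$ Define $$\hat Q'(\mathbb{B}_R,\mathbb{B}_t)=\sum_{i=1}^n\sum_{j=1}^m \lfloor |(\bar N^x_i)^\top\Phi_c^\top(p_{ij}-\Delta_c)-\|N^x_i\||<d_x+\epsilon+\delta^x_{ij}\rfloor\cdot\lfloor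 |(\bar N^y_i)^\top\Phi_c^\top(p_{ij}-\Delta_c)-\|N^y_i\||<d_y+\epsilon+\delta^y_{ij}\rfloor\cdot\lfloor |(\bar N^z_i)^\top\Phi_c^\top(p_{ij}-\Delta_c)-\|N^z_i\||<\epsilon+\delta^z_{ij}\rfloor.$$ Then $\hat Q'(\mathbb{B}_R,\mathbb{B}_t)\ge\max_{r\in\mathbb{B}_R,\Delta\in\mathbb{B}_t}Q(R(r),\Delta)$, and if $\delta_R=\delta_t=0$ then $\hat Q'(\mathbb{B}_R,\mathbb{B}_t)=Q(\Phi_c,\Delta_c)$.
   Context: For a nonzero vector $N\in\mathbb{R}^3$, $\bar N:=N/\|N\|$; $\angle(a,b)\in[0,\pi]$ is the angle between nonzero vectors. $\lfloor S\rfloor$ denotes the indicator of the statement $S$. For $r\in\mathbb{R}^3$, $R(r)\in\mathrm{SO}(3)$ is the rotation by angle $\|r\|$ about the axis $r/\|r\|$ ($R(0)=I$). For $\Phi\in\mathrm{SO}(3)$, $\Delta\in\mathbb{R}^3$, $$Q(\Phi,\Delta)=\sum_{i=1}^n\sum_{j=1}^m \lfloor |(\bar N^x_i)^\top\Phi^\top(p_{ij}-\Delta)-\|N^x_i\||<d_x+\epsilon\rfloor\cdot\lfloor |(\bar N^y_i)^\top\Phi^\top(p_{ij}-\Delta)-\|N^y_i\||<d_y+\epsilon\rfloor\cdot\lfloor |(\bar N^z_i)^\top\Phi^\top(p_{ij}-\Delta)-\|N^z_i\||<\epsilon\rfloor .$$ *)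

theory Defs
  imports "HOL-Analysis.Analysis" "HOL-Analysis.Cross3"
begin

definition nbar :: "real^3 \<Rightarrow> real^3" where
  "nbar N = (1 / norm N) *\<^sub>R N"

definition vang :: "real^3 \<Rightarrow> real^3 \<Rightarrow> real" where
  "vang a b = arccos ((a \<bullet> b) / (norm a * norm b))"

definition outer :: "real^3 \<Rightarrow> real^3 \<Rightarrow> real^3^3" where
  "outer a b = (\<chi> i j. a $ i * b $ j)"

(* cross-product matrix [k]_x, i.e.  [k]_x *v v = k \<times> v *)
definition crossmat :: "real^3 \<Rightarrow> real^3^3" where
  "crossmat k = (\<chi> i j. (cross3 k (axis j 1)) $ i)"

(* R(r): rotation by angle ||r|| about axis r/||r|| (Rodrigues), R(0) = I *)
definition rot :: "real^3 \<Rightarrow> real^3^3" where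
  "rot r = (if r = 0 then mat 1 else
     (let th = norm r; k = nbar r in
        cos th *\<^sub>R mat 1 + sin th *\<^sub>R crossmat k + (1 - cos th) *\<^sub>R outer k k))"

definition ind :: "bool \<Rightarrow> nat" where
  "ind P = (if P then 1 else 0)"

definition Qfun :: "nat \<Rightarrow> nat \<Rightarrow> (nat \<Rightarrow> nat \<Rightarrow> real^3) \<Rightarrow>
    (nat \<Rightarrow> real^3) \<Rightarrow> (nat \<Rightarrow> real^3) \<Rightarrow> (nat \<Rightarrow> real^3) \<Rightarrow>
    real \<Rightarrow> real \<Rightarrow> real \<Rightarrow> real^3^3 \<Rightarrow> real^3 \<Rightarrow> nat" where
  "Qfun n m p Nx Ny Nz dx dy eps Phi Delta =
    (\<Sum>i\<in>{1..n}. \<Sum>j\<in>{1..m}.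
       ind (\<bar>nbar (Nx i) \<bullet> (transpose Phi *v (p i j - Delta)) - norm (Nx i)\<bar> < dx + eps) *
       ind (\<bar>nbar (Ny i) \<bullet> (transpose Phi *v (p i j - Delta)) - norm (Ny i)\<bar> < dy + eps) *
       ind (\<bar>nbar (Nz i) \<bullet> (transpose Phi *v (p i j - Delta)) - norm (Nz i)\<bar> < eps))"

definition gmax :: "real^3^3 \<Rightarrow> real \<Rightarrow> real^3 \<Rightarrow> real^3 \<Rightarrow> real" where
  "gmax Phic dR N w =
    (if w = 0 then 0 else
     (let beta = vang (Phic *v nbar N) w in
      if beta \<le> sqrt 3 * dR then norm w
      else norm w * max (cos (beta - sqrt 3 * dR)) (cos (beta + sqrt 3 * dR))))"

definition gmin :: "real^3^3 \<Rightarrow> real \<Rightarrow> real^3 \<Rightarrow> real^3 \<Rightarrow> real" where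
  "gmin Phic dR N w =
    (if w = 0 then 0 else
     (let beta = vang (Phic *v nbar N) w in
      if beta \<ge> pi - sqrt 3 * dR then - norm w
      else norm w * min (cos (beta - sqrt 3 * dR)) (cos (beta + sqrt 3 * dR))))"

definition delta_bnd :: "real^3^3 \<Rightarrow> real \<Rightarrow> real \<Rightarrow> real^3 \<Rightarrow> real^3 \<Rightarrow> real" where
  "delta_bnd Phic dR dt N w =
    (let c = (Phic *v nbar N) \<bullet> w in
     sqrt 3 * dt + max \<bar>c - gmin Phic dR N w\<bar> \<bar>c - gmax Phic dR N w\<bar>)"

(* \hat Q'(B_R, B_t) with B_R centred at rc (radius dR, inf-norm), B_t centred at Dc (radius dt) *)
definition Qhat :: "nat \<Rightarrow> nat \<Rightarrow> (nat \<Rightarrow> nat \<Rightarrow> real^3) \<Rightarrow>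
    (nat \<Rightarrow> real^3) \<Rightarrow> (nat \<Rightarrow> real^3) \<Rightarrow> (nat \<Rightarrow> real^3) \<Rightarrow>
    real \<Rightarrow> real \<Rightarrow> real \<Rightarrow> real^3 \<Rightarrow> real \<Rightarrow> real^3 \<Rightarrow> real \<Rightarrow> nat" where
  "Qhat n m p Nx Ny Nz dx dy eps rc dR Dc dt =
    (let Phic = rot rc in
    (\<Sum>i\<in>{1..n}. \<Sum>j\<in>{1..m}.
       ind (\<bar>nbar (Nx i) \<bullet> (transpose Phic *v (p i j - Dc)) - norm (Nx i)\<bar>
            < dx + eps + delta_bnd Phic dR dt (Nx i) (p i j - Dc)) *
       ind (\<bar>nbar (Ny i) \<bullet> (transpose Phic *v (p i j - Dc)) - norm (Ny i)\<bar>
            < dy + eps + delta_bnd Phic dR dt (Ny i) (p i j - Dc)) *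
       ind (\<bar>nbar (Nz i) \<bullet> (transpose Phic *v (p i j - Dc)) - norm (Nz i)\<bar>
            < eps + delta_bnd Phic dR dt (Nz i) (p i j - Dc))))"

definition boxinf :: "real^3 \<Rightarrow> real \<Rightarrow> (real^3) set" where
  "boxinf c d = {r. \<forall>k. \<bar>r $ k - c $ k\<bar> \<le> d}"

end

theory Submission
  imports Defs
begin

text \<open>
  Each summand of \<open>Q(R(r), \<Delta>)\<close> is dominated by the corresponding summand of \<open>Q\<^sup>'\<close>, because
  the residual \<open>(R(r) N\<^sub>b\<^sub>a\<^sub>r)\<^sup>T (p - \<Delta>)\<close> differs from its value at the box centre by at most
  \<open>\<delta>\<close>. The translation part contributes at most \<open>\<parallel>\<Delta> - \<Delta>\<^sub>c\<parallel> \<le> \<surd>3 \<delta>\<^sub>t\<close> (Cauchy-Schwarz). For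
  the rotation part, the key fact is that \<open>r \<mapsto> R(r) x\<close> moves a unit vector \<open>x\<close> by an
  angle of at most \<open>\<parallel>r - r'\<parallel>\<close>. Writing \<open>R(r)\<close> as conjugation by the unit quaternion
  \<open>(cos(\<parallel>r\<parallel>/2), sin(\<parallel>r\<parallel>/2) r/\<parallel>r\<parallel>)\<close> shows that the chord \<open>\<parallel>R(r)x - R(r')x\<parallel>\<close> is at most
  \<open>\<parallel>r - r'\<parallel>\<close> for nearby parameters; the angle exceeds the chord only by a cubic term, so
  subdividing the segment from \<open>r\<close> to \<open>r'\<close> into \<open>N\<close> pieces and letting \<open>N \<rightarrow> \<infinity>\<close> gives the
  angle bound. Hence \<open>R(r) N\<^sub>b\<^sub>a\<^sub>r\<close> stays within angle \<open>\<surd>3 \<delta>\<^sub>R\<close> of \<open>\<Phi>\<^sub>c N\<^sub>b\<^sub>a\<^sub>r\<close>, and the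
  spherical triangle inequality places its inner product with \<open>w\<close> in \<open>[g\<^sub>m\<^sub>i\<^sub>n, g\<^sub>m\<^sub>a\<^sub>x]\<close>.
\<close>

section \<open>Rodrigues' formula as a quaternion rotation\<close>

lemma inner_vec3: "(x::real^3) \<bullet> y = x$1 * y$1 + x$2 * y$2 + x$3 * y$3"
  by (simp add: inner_vec_def sum_3)

lemma crossmat_mult_vec: "crossmat k *v x = cross3 k x"
  by (simp add: vec_eq_iff matrix_vector_mult_def sum_3 crossmat_def cross3_def axis_def
      forall_3 vector_3)

lemma outer_self_mult_vec: "outer k k *v x = (k \<bullet> x) *\<^sub>R k"
  by (simp add: vec_eq_iff matrix_vector_mult_def sum_3 outer_def inner_vec3 forall_3
      algebra_simps)

lemma inner_transpose_mult_vec: "x \<bullet> (transpose M *v y) = (M *v x) \<bullet> (y::real^'n)"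
  by (metis dot_lmul_matrix inner_commute transpose_matrix_vector)

lemma norm_nbar: "r \<noteq> 0 \<Longrightarrow> norm (nbar r) = 1"
  by (simp add: nbar_def)

lemma norm_nbar_le_1: "norm (nbar r) \<le> 1"
  by (cases "r = 0") (auto simp: norm_nbar nbar_def)

lemma scaleR_norm_nbar: "norm r *\<^sub>R nbar r = r"
  by (simp add: nbar_def)

lemma inner_eq_norm_times_inner_nbar: "b \<bullet> w = norm w * (b \<bullet> nbar w)"
  by (cases "w = 0") (simp_all add: nbar_def)

text \<open>The map \<open>x \<mapsto> q x q\<^sup>*\<close> for the quaternion \<open>q = (s, v)\<close>, written without quaternions.\<close>

definition quat_rot :: "real \<Rightarrow> real^3 \<Rightarrow> real^3 \<Rightarrow> real^3" where
  "quat_rot s v x = (s\<^sup>2 - v \<bullet> v) *\<^sub>R x + (2 * (v \<bullet> x)) *\<^sub>R v + (2 * s) *\<^sub>R cross3 v x"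

lemma inner_quat_rot:
  "quat_rot s v x \<bullet> quat_rot t u x =
     (2 * (s * t + v \<bullet> u)\<^sup>2 - (s\<^sup>2 + v \<bullet> v) * (t\<^sup>2 + u \<bullet> u)) * (x \<bullet> x)
     + 2 * ((t *\<^sub>R v - s *\<^sub>R u - cross3 u v) \<bullet> x)\<^sup>2"
  unfolding quat_rot_def inner_vec3 by (simp add: cross3_def) algebra

lemma inner_quat_rot_self: "quat_rot s v x \<bullet> quat_rot s v x = (s\<^sup>2 + v \<bullet> v)\<^sup>2 * (x \<bullet> x)"
  using inner_quat_rot[of s v x s v] by (simp add: power2_eq_square)

definition rot_quat_scalar :: "real^3 \<Rightarrow> real" where
  "rot_quat_scalar r = cos (norm r / 2)"

definition rot_quat_vector :: "real^3 \<Rightarrow> real^3" where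
  "rot_quat_vector r = sin (norm r / 2) *\<^sub>R nbar r"

lemma rot_quat_unit: "(rot_quat_scalar r)\<^sup>2 + rot_quat_vector r \<bullet> rot_quat_vector r = 1"
  by (cases "r = 0") (simp_all add: rot_quat_scalar_def rot_quat_vector_def
      power2_eq_square[symmetric] norm_nbar power2_norm_eq_inner[symmetric])

lemma rot_eq_quat_rot: "rot r *v x = quat_rot (rot_quat_scalar r) (rot_quat_vector r) x"
proof (cases "r = 0")
  case True
  then show ?thesis
    by (simp add: rot_def quat_rot_def rot_quat_scalar_def rot_quat_vector_def)
next
  case False
  define h where "h = norm r / 2"
  define k where "k = nbar r"
  have kk: "k \<bullet> k = 1"
    using False by (simp add: k_def norm_nbar power2_norm_eq_inner[symmetric])
  have double: "norm r = 2 * h"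
    by (simp add: h_def)
  have cos: "cos (norm r) = (cos h)\<^sup>2 - (sin h)\<^sup>2" "1 - cos (norm r) = 2 * (sin h)\<^sup>2"
    unfolding double cos_double_sin by (simp_all add: cos_double)
  have sin: "sin (norm r) = 2 * sin h * cos h"
    unfolding double by (rule sin_double)
  have cos_sq: "cos h * cos h = 1 - sin h * sin h"
    using sin_cos_squared_add[of h] by (simp add: power2_eq_square)
  have "rot r *v x = cos (norm r) *\<^sub>R x + sin (norm r) *\<^sub>R cross3 k x
      + (1 - cos (norm r)) *\<^sub>R ((k \<bullet> x) *\<^sub>R k)"
    using False by (simp add: rot_def k_def Let_def matrix_vector_mult_add_rdistrib
        scaleR_matrix_vector_assoc[symmetric] crossmat_mult_vec outer_self_mult_vec)
  also have "\<dots> = quat_rot (cos h) (sin h *\<^sub>R k) x"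
    unfolding quat_rot_def cos sin using kk
    by (simp add: cross_mult_left algebra_simps power2_eq_square cos_sq)
  finally show ?thesis
    by (simp add: rot_quat_scalar_def rot_quat_vector_def h_def k_def)
qed

lemma norm_rot_mult_vec: "norm (rot r *v x) = norm x"
  unfolding norm_eq_sqrt_inner rot_eq_quat_rot inner_quat_rot_self rot_quat_unit by simp

section \<open>Rotations with nearby parameters\<close>

lemma one_minus_cos_le: "1 - cos x \<le> (x::real)\<^sup>2 / 2"
proof -
  have "cos x = 1 - 2 * (sin (x / 2))\<^sup>2"
    using cos_double_sin[of "x / 2"] by simp
  moreover have "(sin (x / 2))\<^sup>2 \<le> (x / 2)\<^sup>2"
    by (metis abs_sin_x_le_abs_x abs_ge_zero power2_abs power_mono)
  ultimately show ?thesis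
    by (simp add: power_divide)
qed

lemma rot_quat_inner_ge:
  "1 - (norm (r - r'))\<^sup>2 / 8
     \<le> rot_quat_scalar r * rot_quat_scalar r' + rot_quat_vector r \<bullet> rot_quat_vector r'"
proof -
  define A B where "A = norm r / 2" and "B = norm r' / 2"
  define c where "c = nbar r \<bullet> nbar r'"
  have "A \<ge> 0" "B \<ge> 0"
    by (simp_all add: A_def B_def)
  have "c \<le> norm (nbar r) * norm (nbar r')"
    unfolding c_def by (rule norm_cauchy_schwarz)
  also have "\<dots> \<le> 1"
    using norm_nbar_le_1[of r] norm_nbar_le_1[of r'] by (simp add: mult_le_one)
  finally have "c \<le> 1" .
  have "r \<bullet> r' = (norm r *\<^sub>R nbar r) \<bullet> (norm r' *\<^sub>R nbar r')"
    by (simp only: scaleR_norm_nbar)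
  then have "r \<bullet> r' = 4 * A * B * c"
    by (simp add: A_def B_def c_def)
  moreover have "r \<bullet> r = 4 * A\<^sup>2" "r' \<bullet> r' = 4 * B\<^sup>2"
    by (simp_all add: A_def B_def power2_norm_eq_inner[symmetric] power_divide)
  moreover have "(norm (r - r'))\<^sup>2 = r \<bullet> r - 2 * (r \<bullet> r') + r' \<bullet> r'"
    by (simp add: power2_norm_eq_inner inner_diff_left inner_diff_right inner_commute)
  ultimately have dist: "(norm (r - r'))\<^sup>2 = 4 * (A - B)\<^sup>2 + 8 * (A * B * (1 - c))"
    by (simp add: algebra_simps power2_eq_square)
  have quat: "rot_quat_scalar r * rot_quat_scalar r' + rot_quat_vector r \<bullet> rot_quat_vector r'
      = cos (A - B) - sin A * sin B * (1 - c)"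
    by (simp add: rot_quat_scalar_def rot_quat_vector_def A_def B_def c_def cos_diff
        algebra_simps)
  have "sin A * sin B \<le> \<bar>sin A\<bar> * \<bar>sin B\<bar>"
    by (metis abs_ge_self abs_mult)
  also have "\<dots> \<le> A * B"
    using abs_sin_x_le_abs_x[of A] abs_sin_x_le_abs_x[of B] \<open>A \<ge> 0\<close> \<open>B \<ge> 0\<close>
    by (simp add: mult_mono)
  finally have "sin A * sin B * (1 - c) \<le> A * B * (1 - c)"
    using \<open>c \<le> 1\<close> by (simp add: mult_right_mono)
  then have "1 - ((A - B)\<^sup>2 / 2 + A * B * (1 - c)) \<le> cos (A - B) - sin A * sin B * (1 - c)"
    using one_minus_cos_le[of "A - B"] by linarith
  moreover have "(norm (r - r'))\<^sup>2 / 8 = (A - B)\<^sup>2 / 2 + A * B * (1 - c)"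
    unfolding dist by simp
  ultimately show ?thesis
    unfolding quat by linarith
qed

lemma norm_rot_diff_le:
  assumes x: "norm x = 1" and close: "(norm (r - r'))\<^sup>2 \<le> 8"
  shows "norm (rot r *v x - rot r' *v x) \<le> norm (r - r')"
proof -
  define \<sigma> where
    "\<sigma> = rot_quat_scalar r * rot_quat_scalar r' + rot_quat_vector r \<bullet> rot_quat_vector r'"
  define d where "d = (norm (r - r'))\<^sup>2"
  have "1 - d / 8 \<le> \<sigma>" "0 \<le> 1 - d / 8"
    using close rot_quat_inner_ge[of r r'] by (simp_all add: \<sigma>_def d_def)
  then have \<sigma>_sq: "(1 - d / 8)\<^sup>2 \<le> \<sigma>\<^sup>2"
    by (rule power_mono)
  have xx: "x \<bullet> x = 1"
    using x by (simp add: norm_eq_1)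
  have "(rot r *v x) \<bullet> (rot r' *v x) \<ge> 2 * \<sigma>\<^sup>2 - 1"
    unfolding rot_eq_quat_rot inner_quat_rot rot_quat_unit xx \<sigma>_def by simp
  moreover have "(rot r *v x) \<bullet> (rot r *v x) = 1" "(rot r' *v x) \<bullet> (rot r' *v x) = 1"
    using x by (simp_all add: norm_rot_mult_vec power2_norm_eq_inner[symmetric])
  ultimately have "(norm (rot r *v x - rot r' *v x))\<^sup>2 \<le> 4 - 4 * \<sigma>\<^sup>2"
    by (simp add: power2_norm_eq_inner inner_diff_left inner_diff_right inner_commute)
  also have "\<dots> \<le> 4 - 4 * (1 - d / 8)\<^sup>2"
    using \<sigma>_sq by linarith
  also have "\<dots> = d - d\<^sup>2 / 16"
    by (simp add: power2_eq_square field_simps)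
  also have "\<dots> \<le> d"
    by simp
  finally show ?thesis
    by (simp add: d_def power2_le_iff_abs_le)
qed

section \<open>Angles between unit vectors\<close>

lemma abs_inner_unit_le_1:
  "norm a = 1 \<Longrightarrow> norm b = 1 \<Longrightarrow> \<bar>a \<bullet> b\<bar> \<le> (1::real)"
  for a b :: "'a::real_inner"
  using Cauchy_Schwarz_ineq2[of a b] by simp

lemma vang_unit: "norm a = 1 \<Longrightarrow> norm b = 1 \<Longrightarrow> vang a b = arccos (a \<bullet> b)"
  by (simp add: vang_def)

lemma vang_bounds: "norm a = 1 \<Longrightarrow> norm b = 1 \<Longrightarrow> 0 \<le> vang a b \<and> vang a b \<le> pi"
  using abs_inner_unit_le_1[of a b] by (simp add: vang_unit arccos_bounded)

lemma cos_vang: "norm a = 1 \<Longrightarrow> norm b = 1 \<Longrightarrow> cos (vang a b) = a \<bullet> b"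
  using abs_inner_unit_le_1[of a b] by (simp add: vang_unit)

lemma vang_self: "norm a = 1 \<Longrightarrow> vang a a = 0"
  by (simp add: vang_unit power2_norm_eq_inner[symmetric])

lemma vang_commute: "vang a b = vang b a"
  by (simp add: vang_def inner_commute mult.commute)

lemma vang_nbar_right: "w \<noteq> 0 \<Longrightarrow> vang b (nbar w) = vang b w"
  by (simp add: vang_def nbar_def norm_nbar mult.commute)

lemma vang_triangle:
  assumes a: "norm a = 1" and b: "norm b = 1" and c: "norm c = 1"
  shows "vang a c \<le> vang a b + vang b c"
proof (cases "vang a b + vang b c \<ge> pi")
  case True
  then show ?thesis
    using vang_bounds[OF a c] by linarith
next
  case False
  define x y where "x = a \<bullet> b" and "y = b \<bullet> c"
  have "\<bar>x\<bar> \<le> 1" "\<bar>y\<bar> \<le> 1"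
    using abs_inner_unit_le_1 a b c by (auto simp: x_def y_def)
  have aa: "a \<bullet> a = 1" and bb: "b \<bullet> b = 1" and cc: "c \<bullet> c = 1"
    using a b c by (simp_all add: power2_norm_eq_inner[symmetric])
  \<comment> \<open>the parts of \<open>a\<close> and \<open>c\<close> orthogonal to \<open>b\<close> have lengths \<open>sin (vang a b)\<close>, \<open>sin (vang b c)\<close>\<close>
  define a' c' where "a' = a - x *\<^sub>R b" and "c' = c - y *\<^sub>R b"
  have "a \<bullet> c = x * y + a' \<bullet> c'"
    using bb by (simp add: a'_def c'_def x_def y_def inner_diff_left inner_diff_right
        inner_commute algebra_simps)
  moreover have "norm a' = sqrt (1 - x\<^sup>2)" "norm c' = sqrt (1 - y\<^sup>2)"
    using aa bb cc by (simp_all add: norm_eq_sqrt_inner a'_def c'_def x_def y_def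
        inner_diff_left inner_diff_right inner_commute power2_eq_square algebra_simps)
  moreover have "- (norm a' * norm c') \<le> a' \<bullet> c'"
    using Cauchy_Schwarz_ineq2[of a' c'] by linarith
  ultimately have "x * y - sqrt (1 - x\<^sup>2) * sqrt (1 - y\<^sup>2) \<le> a \<bullet> c"
    by simp
  moreover have "cos (vang a b + vang b c) = x * y - sqrt (1 - x\<^sup>2) * sqrt (1 - y\<^sup>2)"
    using \<open>\<bar>x\<bar> \<le> 1\<close> \<open>\<bar>y\<bar> \<le> 1\<close> by (simp add: cos_add vang_unit a b c x_def y_def sin_arccos)
  ultimately have "cos (vang a b + vang b c) \<le> a \<bullet> c"
    by linarith
  then have "arccos (a \<bullet> c) \<le> arccos (cos (vang a b + vang b c))"
    using abs_inner_unit_le_1[OF a c] by (intro arccos_le_arccos) auto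
  also have "\<dots> = vang a b + vang b c"
    using False vang_bounds[OF a b] vang_bounds[OF b c] by (simp add: arccos_cos)
  finally show ?thesis
    by (simp add: vang_unit a c)
qed

lemma cubic_taylor_le_sin:
  fixes x :: real
  assumes "0 \<le> x"
  shows "x - x ^ 3 / 6 \<le> sin x"
proof -
  have "(\<Sum>m<3. sin_coeff m * x ^ m) = x"
    by (simp add: sin_coeff_def numeral_3_eq_3 lessThan_Suc)
  then have "\<bar>sin x - x\<bar> \<le> inverse (fact 3) * \<bar>x\<bar> ^ 3"
    using Maclaurin_sin_bound[of x 3] by simp
  also have "inverse (fact 3) = (1 / 6 :: real)"
    by (simp add: fact_numeral)
  finally show ?thesis
    using assms unfolding abs_le_iff by simp
qed

text \<open>The chord is \<open>2 sin(\<theta>/2)\<close>, and \<open>sin y \<ge> y - y\<^sup>3/6 \<ge> y/2\<close> for \<open>0 \<le> y \<le> \<pi>/2\<close>.\<close>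

lemma vang_le_chord:
  assumes a: "norm a = 1" and b: "norm b = 1"
  shows "vang a b \<le> norm (a - b) + (norm (a - b))^3"
proof -
  define y where "y = vang a b / 2"
  have "0 \<le> y" "y \<le> pi / 2"
    using vang_bounds[OF a b] by (auto simp: y_def)
  then have "0 \<le> sin y"
    by (intro sin_ge_zero) auto
  have "pi \<le> 3.2"
    using pi_approx(2) by simp
  then have "y \<le> 1.6"
    using \<open>y \<le> pi / 2\<close> by linarith
  then have "y * y \<le> 1.6 * 1.6"
    using \<open>0 \<le> y\<close> by (intro mult_mono) auto
  then have "y\<^sup>2 \<le> 3"
    by (simp add: power2_eq_square)
  have "(norm (a - b))\<^sup>2 = 2 - 2 * cos (2 * y)"
    using a b by (simp add: y_def cos_vang power2_norm_eq_inner inner_diff_left inner_diff_right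
        inner_commute norm_eq_1)
  also have "\<dots> = (2 * sin y)\<^sup>2"
    by (simp add: cos_double_sin power2_eq_square)
  finally have chord: "norm (a - b) = 2 * sin y"
    using \<open>0 \<le> sin y\<close> by (subst (asm) power2_eq_iff_nonneg) auto
  have sin_ge: "y - y ^ 3 / 6 \<le> sin y"
    using \<open>0 \<le> y\<close> by (rule cubic_taylor_le_sin)
  have "y * y\<^sup>2 \<le> y * 3"
    using \<open>y\<^sup>2 \<le> 3\<close> \<open>0 \<le> y\<close> by (rule mult_left_mono)
  moreover have "y ^ 3 = y * y\<^sup>2"
    by (simp add: power3_eq_cube power2_eq_square mult.assoc)
  ultimately have "y / 2 \<le> sin y"
    using sin_ge by linarith
  then have "y ^ 3 \<le> (2 * sin y) ^ 3"
    using \<open>0 \<le> y\<close> by (intro power_mono) auto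
  moreover have "0 \<le> y ^ 3"
    using \<open>0 \<le> y\<close> by simp
  moreover have "vang a b = 2 * y"
    by (simp add: y_def)
  ultimately show ?thesis
    unfolding chord using sin_ge by linarith
qed

lemma vang_chain_le:
  assumes unit: "\<And>k. norm (f k) = 1" and step: "\<And>k. vang (f k) (f (Suc k)) \<le> c"
  shows "vang (f 0) (f N) \<le> N * c"
proof (induction N)
  case 0
  show ?case
    by (simp add: vang_self unit)
next
  case (Suc N)
  have "vang (f 0) (f (Suc N)) \<le> vang (f 0) (f N) + vang (f N) (f (Suc N))"
    by (rule vang_triangle[OF unit unit unit])
  also have "\<dots> \<le> N * c + c"
    using Suc step[of N] by linarith
  finally show ?case
    by (simp add: algebra_simps)
qed

section \<open>Rotation is 1-Lipschitz in its parameter, measured in angle\<close>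

lemma vang_rot_le_subdivided:
  fixes N :: nat
  assumes x: "norm x = 1" and N: "N \<ge> 1" and "norm (r' - r) \<le> N"
  shows "vang (rot r *v x) (rot r' *v x) \<le> norm (r' - r) + (norm (r' - r))^3 / (real N)\<^sup>2"
proof -
  define l where "l = norm (r' - r) / N"
  define f where "f k = rot (r + (k / N) *\<^sub>R (r' - r)) *v x" for k :: nat
  have "0 \<le> l" "l \<le> 1"
    using N assms(3) by (simp_all add: l_def)
  have unit: "norm (f k) = 1" for k
    by (simp add: f_def norm_rot_mult_vec x)
  have "vang (f k) (f (Suc k)) \<le> l + l^3" for k
  proof -
    have "(r + (k / N) *\<^sub>R (r' - r)) - (r + (Suc k / N) *\<^sub>R (r' - r)) = - ((1 / N) *\<^sub>R (r' - r))"
      by (simp add: algebra_simps add_divide_distrib)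
    then have step: "norm ((r + (k / N) *\<^sub>R (r' - r)) - (r + (Suc k / N) *\<^sub>R (r' - r))) = l"
      using N by (simp add: l_def)
    moreover have "l\<^sup>2 \<le> 8"
      using \<open>0 \<le> l\<close> \<open>l \<le> 1\<close> power_le_one[of l 2] by linarith
    ultimately have "norm (f k - f (Suc k)) \<le> l"
      unfolding f_def
      using norm_rot_diff_le[OF x, of "r + (k / N) *\<^sub>R (r' - r)" "r + (Suc k / N) *\<^sub>R (r' - r)"]
      by simp
    moreover from this have "(norm (f k - f (Suc k)))^3 \<le> l^3"
      by (intro power_mono) auto
    ultimately show ?thesis
      using vang_le_chord[OF unit unit, of k "Suc k"] by linarith
  qed
  then have "vang (f 0) (f N) \<le> N * (l + l^3)"
    by (rule vang_chain_le[OF unit])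
  moreover have "f 0 = rot r *v x" "f N = rot r' *v x"
    using N by (simp_all add: f_def)
  moreover have "N * (l + l^3) = norm (r' - r) + (norm (r' - r))^3 / (real N)\<^sup>2"
    using N by (simp add: l_def power3_eq_cube power2_eq_square field_simps)
  ultimately show ?thesis
    by simp
qed

lemma vang_rot_le:
  assumes x: "norm x = 1"
  shows "vang (rot r *v x) (rot r' *v x) \<le> norm (r' - r)"
proof (rule field_le_epsilon)
  fix e :: real
  assume "0 < e"
  define L where "L = norm (r' - r)"
  obtain N :: nat where N: "max 1 (max L (L^3 / e)) \<le> N"
    using real_arch_simple by blast
  then have "L^3 \<le> e * N"
    using \<open>0 < e\<close> by (simp add: divide_le_eq mult.commute)
  moreover have "L^3 / (real N)\<^sup>2 \<le> L^3 / N"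
    using N by (intro divide_left_mono) (auto simp: L_def power2_eq_square)
  moreover have "L^3 / N \<le> e"
    using \<open>L^3 \<le> e * N\<close> N by (simp add: divide_le_eq mult.commute)
  ultimately have "L^3 / (real N)\<^sup>2 \<le> e"
    by linarith
  moreover have "vang (rot r *v x) (rot r' *v x) \<le> L + L^3 / (real N)\<^sup>2"
    using N unfolding L_def by (intro vang_rot_le_subdivided x) auto
  ultimately show "vang (rot r *v x) (rot r' *v x) \<le> norm (r' - r) + e"
    by (simp add: L_def)
qed

lemma inner_between_gmin_gmax:
  assumes a: "norm a = 1" and b: "norm (Phic *v nbar N) = 1"
    and close: "vang a (Phic *v nbar N) \<le> sqrt 3 * dR"
  shows "gmin Phic dR N w \<le> a \<bullet> w \<and> a \<bullet> w \<le> gmax Phic dR N w"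
proof (cases "w = 0")
  case True
  then show ?thesis
    by (simp add: gmin_def gmax_def)
next
  case False
  define s where "s = sqrt 3 * dR"
  define b where "b = Phic *v nbar N"
  define e where "e = nbar w"
  have e: "norm e = 1"
    using False by (simp add: e_def norm_nbar)
  define \<beta> \<gamma> where "\<beta> = vang b e" and "\<gamma> = vang a e"
  have beta: "vang (Phic *v nbar N) w = \<beta>"
    using False by (simp add: \<beta>_def b_def e_def vang_nbar_right)
  have aw: "a \<bullet> w = norm w * cos \<gamma>"
    using cos_vang[OF a e] by (simp add: inner_eq_norm_times_inner_nbar[of a w] \<gamma>_def e_def)
  have "vang a b \<le> s"
    using close by (simp add: s_def b_def)
  moreover have "\<beta> \<le> vang a b + \<gamma>" "\<gamma> \<le> vang a b + \<beta>"
    using vang_triangle[OF b[folded b_def] a e] vang_triangle[OF a b[folded b_def] e]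
    by (simp_all add: \<beta>_def \<gamma>_def vang_commute)
  moreover have "0 \<le> \<gamma>" "\<gamma> \<le> pi"
    using vang_bounds[OF a e] by (auto simp: \<gamma>_def)
  ultimately have cos_\<gamma>: "\<not> \<beta> \<le> s \<Longrightarrow> cos \<gamma> \<le> cos (\<beta> - s)"
    "\<not> pi - s \<le> \<beta> \<Longrightarrow> cos (\<beta> + s) \<le> cos \<gamma>"
    by (auto intro!: cos_monotone_0_pi_le)
  have "\<bar>a \<bullet> w\<bar> \<le> norm w"
    using Cauchy_Schwarz_ineq2[of a w] a by simp
  moreover have "0 < norm w"
    using False by simp
  ultimately show ?thesis
    using cos_\<gamma> unfolding gmax_def gmin_def Let_def beta s_def[symmetric] aw
    by (auto simp: abs_le_iff intro: order_trans[OF _ mult_left_mono] order_trans[OF mult_left_mono])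
qed

lemma norm_diff_le_boxinf:
  assumes "x \<in> boxinf c d"
  shows "norm (x - c) \<le> sqrt 3 * d"
proof -
  have coord: "\<bar>(x - c) $ k\<bar> \<le> d" for k
    using assms by (simp add: boxinf_def)
  then have "0 \<le> d"
    by (meson abs_ge_zero order_trans)
  have "((x - c) $ k)\<^sup>2 \<le> d\<^sup>2" for k
    using coord[of k] by (metis abs_ge_zero power2_abs power_mono)
  then have "(x - c) \<bullet> (x - c) \<le> 3 * d\<^sup>2"
    using forall_3 by (simp add: inner_vec3 power2_eq_square) (smt (verit))
  then have "norm (x - c) \<le> sqrt (3 * d\<^sup>2)"
    by (simp add: norm_eq_sqrt_inner)
  then show ?thesis
    using \<open>0 \<le> d\<close> by (simp add: real_sqrt_mult)
qed

lemma residual_shift_le_delta_bnd: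
  assumes N: "N \<noteq> 0" and r: "r \<in> boxinf rc dR" and \<Delta>: "\<Delta> \<in> boxinf Dc dt"
  shows "\<bar>nbar N \<bullet> (transpose (rot r) *v (p - \<Delta>)) - nbar N \<bullet> (transpose (rot rc) *v (p - Dc))\<bar>
    \<le> delta_bnd (rot rc) dR dt N (p - Dc)"
proof -
  define a b where "a = rot r *v nbar N" and "b = rot rc *v nbar N"
  define w where "w = p - Dc"
  have a: "norm a = 1" and b: "norm b = 1"
    using N by (simp_all add: a_def b_def norm_rot_mult_vec norm_nbar)
  have "vang a b \<le> norm (rc - r)"
    unfolding a_def b_def using N by (intro vang_rot_le norm_nbar)
  also have "\<dots> \<le> sqrt 3 * dR"
    using norm_diff_le_boxinf[OF r] by (simp add: norm_minus_commute)
  finally have "gmin (rot rc) dR N w \<le> a \<bullet> w \<and> a \<bullet> w \<le> gmax (rot rc) dR N w"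
    using inner_between_gmin_gmax[OF a] b by (simp add: b_def)
  then have rotation: "\<bar>a \<bullet> w - b \<bullet> w\<bar>
      \<le> max \<bar>b \<bullet> w - gmin (rot rc) dR N w\<bar> \<bar>b \<bullet> w - gmax (rot rc) dR N w\<bar>"
    by (auto simp: abs_le_iff max_def)
  have "\<bar>a \<bullet> (\<Delta> - Dc)\<bar> \<le> norm a * norm (\<Delta> - Dc)"
    by (rule Cauchy_Schwarz_ineq2)
  also have "\<dots> \<le> sqrt 3 * dt"
    using a norm_diff_le_boxinf[OF \<Delta>] by simp
  finally have translation: "\<bar>a \<bullet> (\<Delta> - Dc)\<bar> \<le> sqrt 3 * dt" .
  have "nbar N \<bullet> (transpose (rot r) *v (p - \<Delta>)) = a \<bullet> w - a \<bullet> (\<Delta> - Dc)"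
    unfolding inner_transpose_mult_vec by (simp add: a_def w_def inner_diff_right)
  moreover have "nbar N \<bullet> (transpose (rot rc) *v (p - Dc)) = b \<bullet> w"
    unfolding inner_transpose_mult_vec by (simp add: b_def w_def)
  moreover have "delta_bnd (rot rc) dR dt N (p - Dc)
      = sqrt 3 * dt + max \<bar>b \<bullet> w - gmin (rot rc) dR N w\<bar> \<bar>b \<bullet> w - gmax (rot rc) dR N w\<bar>"
    by (simp add: delta_bnd_def Let_def b_def w_def)
  ultimately show ?thesis
    using rotation translation by linarith
qed

lemma delta_bnd_0:
  assumes "norm (Phic *v nbar N) = 1"
  shows "delta_bnd Phic 0 0 N w = 0"
proof (cases "w = 0")
  case True
  then show ?thesis
    by (simp add: delta_bnd_def gmin_def gmax_def)
next
  case False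
  define b where "b = Phic *v nbar N"
  have b: "norm b = 1" and w: "norm (nbar w) = 1"
    using assms False by (simp_all add: b_def norm_nbar)
  have "b \<bullet> w = norm w * cos (vang b w)"
    using cos_vang[OF b w] False
    by (simp add: inner_eq_norm_times_inner_nbar[of b w] vang_nbar_right)
  moreover have "0 \<le> vang b w" "vang b w \<le> pi"
    using vang_bounds[OF b w] False by (simp_all add: vang_nbar_right)
  ultimately have "gmax Phic 0 N w = b \<bullet> w" "gmin Phic 0 N w = b \<bullet> w"
    using False by (auto simp: gmax_def gmin_def Let_def b_def[symmetric])
  then show ?thesis
    by (simp add: delta_bnd_def Let_def b_def[symmetric])
qed

lemma ind_less_shift_le:
  assumes "\<bar>X - Y\<bar> \<le> (\<delta>::real)"
  shows "ind (\<bar>X - c\<bar> < d) \<le> ind (\<bar>Y - c\<bar> < d + \<delta>)"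
  using assms by (auto simp: ind_def)

lemma Qfun_le_Qhat:
  assumes "\<forall>i\<in>{1..n}. Nx i \<noteq> 0 \<and> Ny i \<noteq> 0 \<and> Nz i \<noteq> 0"
    and "r \<in> boxinf rc dR" and "\<Delta> \<in> boxinf Dc dt"
  shows "Qfun n m p Nx Ny Nz dx dy eps (rot r) \<Delta> \<le> Qhat n m p Nx Ny Nz dx dy eps rc dR Dc dt"
  unfolding Qfun_def Qhat_def Let_def
  using assms
  by (intro sum_mono mult_le_mono ind_less_shift_le residual_shift_le_delta_bnd) auto

lemma Qhat_0_eq_Qfun:
  assumes "\<forall>i\<in>{1..n}. Nx i \<noteq> 0 \<and> Ny i \<noteq> 0 \<and> Nz i \<noteq> 0"
  shows "Qhat n m p Nx Ny Nz dx dy eps rc 0 Dc 0 = Qfun n m p Nx Ny Nz dx dy eps (rot rc) Dc"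
  unfolding Qfun_def Qhat_def Let_def
  using assms by (intro sum.cong refl) (simp add: delta_bnd_0 norm_rot_mult_vec norm_nbar)

theorem mainTheorem3:
  fixes n m :: nat and p :: "nat \<Rightarrow> nat \<Rightarrow> real^3"
    and Nx Ny Nz :: "nat \<Rightarrow> real^3"
    and dx dy eps dR dt :: real and rc Dc :: "real^3"
  assumes "n \<ge> 1" "m \<ge> 1"
    and "\<forall>i\<in>{1..n}. Nx i \<noteq> 0 \<and> Ny i \<noteq> 0 \<and> Nz i \<noteq> 0"
    and "dx > 0" "dy > 0" "eps > 0"
    and "dR \<ge> 0" "sqrt 3 * dR \<le> pi" "dt \<ge> 0"
  shows "(\<forall>r\<in>boxinf rc dR. \<forall>Delta\<in>boxinf Dc dt.
            Qfun n m p Nx Ny Nz dx dy eps (rot r) Delta \<le> Qhat n m p Nx Ny Nz dx dy eps rc dR Dc dt)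
       \<and> (dR = 0 \<and> dt = 0 \<longrightarrow>
            Qhat n m p Nx Ny Nz dx dy eps rc dR Dc dt = Qfun n m p Nx Ny Nz dx dy eps (rot rc) Dc)"
  using Qfun_le_Qhat[OF assms(3)] Qhat_0_eq_Qfun[OF assms(3)] by blast

end
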